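(* Let $f$ be a real-valued function on $[0,1]^2$ which is $1$-periodic in each variable, belongs to $C^2([0,1]^2)$, and is not identically zero. For an integer $N\ge 2$, define $g:\mathbb{Z}_N^2\to\mathbb{R}$ by $g(x_1,x_2)=f(x_1/N,x_2/N)$. Assume that $$N\|f\|_{L^2([0,1]^2)}^2\ge 8\|f\|_{C^2([0,1]^2)}^2.$$ Define $\widehat g(m)=\frac{1}{N}\sum_{x\in\mathbb{Z}_N^2}\chi(-x\cdot m)g(x)$ for $m\in\mathbb{Z}_N^2$, where $\chi(t)=e^{2\pi i t/N}$, and $FR(g)=\|\widehat g\|_1/\|\widehat g\|_2$. Then $$FR(g)\le 2\frac{\left|\int_{[0,1]^2} f(x)\,dx\right|}{\|f\|_{L^2([0,1]^2)}}+16\pi^2\frac{\|f\|_{C^2([0,1]^2)}}{\|f\|_{L^2([0,1]^2)}}\log N+\frac{8\pi^2}{\|f\|_{L^2([0,1]^2)}}\frac{\|f\|_{C^2([0,1]^2)}}{N}.$$ In particular, if $f\ge 0$ and $\mu=\int_{[0,1]^2}f(x)\,dx>0$, then $$FR(g)\le 2+16\pi^2\frac{\|f\|_{C^2([0,1]^2)}}{\mu}\log N+\frac{8\pi^2}{\mu}\frac{\|f\|_{C^2([0,1]^2)}}{N}.$$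
   Context: $\|f\|_{C^2([0,1]^2)}$ denotes the standard $C^2$ norm (supremum over $[0,1]^2$ of $|\partial^\alpha f|$ over all multi-indices $|\alpha|\le 2$); $\log$ is the natural logarithm; the $\ell^1$ and $\ell^2$ norms of $\widehat g$ are over $m\in\mathbb{Z}_N^2$. *)

theory Defs
  imports "HOL-Analysis.Analysis"
begin

definition pd1 :: "(real \<times> real \<Rightarrow> real) \<Rightarrow> real \<times> real \<Rightarrow> real" where
  "pd1 f p = deriv (\<lambda>t. f (t, snd p)) (fst p)"

definition pd2 :: "(real \<times> real \<Rightarrow> real) \<Rightarrow> real \<times> real \<Rightarrow> real" where
  "pd2 f p = deriv (\<lambda>t. f (fst p, t)) (snd p)"

definition has_partials :: "(real \<times> real \<Rightarrow> real) \<Rightarrow> bool" where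
  "has_partials f \<longleftrightarrow>
     (\<forall>p. (\<lambda>t. f (t, snd p)) differentiable (at (fst p))) \<and>
     (\<forall>p. (\<lambda>t. f (fst p, t)) differentiable (at (snd p)))"

definition C2 :: "(real \<times> real \<Rightarrow> real) \<Rightarrow> bool" where
  "C2 f \<longleftrightarrow> continuous_on UNIV f \<and>
     has_partials f \<and> has_partials (pd1 f) \<and> has_partials (pd2 f) \<and>
     continuous_on UNIV (pd1 f) \<and> continuous_on UNIV (pd2 f) \<and>
     continuous_on UNIV (pd1 (pd1 f)) \<and> continuous_on UNIV (pd2 (pd1 f)) \<and>
     continuous_on UNIV (pd1 (pd2 f)) \<and> continuous_on UNIV (pd2 (pd2 f))"

definition unit_square :: "(real \<times> real) set" where
  "unit_square = {0..1} \<times> {0..1}"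

definition C2_norm :: "(real \<times> real \<Rightarrow> real) \<Rightarrow> real" where
  "C2_norm f = (SUP p\<in>unit_square. Max {\<bar>f p\<bar>, \<bar>pd1 f p\<bar>, \<bar>pd2 f p\<bar>,
      \<bar>pd1 (pd1 f) p\<bar>, \<bar>pd2 (pd1 f) p\<bar>, \<bar>pd1 (pd2 f) p\<bar>, \<bar>pd2 (pd2 f) p\<bar>})"

definition L2_norm_sq :: "(real \<times> real \<Rightarrow> real) \<Rightarrow> real" where
  "L2_norm_sq f = integral unit_square (\<lambda>p. (f p)\<^sup>2)"

definition L2_norm :: "(real \<times> real \<Rightarrow> real) \<Rightarrow> real" where
  "L2_norm f = sqrt (L2_norm_sq f)"

definition ZN2 :: "nat \<Rightarrow> (nat \<times> nat) set" where
  "ZN2 N = {0..<N} \<times> {0..<N}"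

definition chi :: "nat \<Rightarrow> real \<Rightarrow> complex" where
  "chi N t = exp (2 * pi * \<i> * complex_of_real t / of_nat N)"

definition fourier :: "nat \<Rightarrow> (nat \<times> nat \<Rightarrow> real) \<Rightarrow> nat \<times> nat \<Rightarrow> complex" where
  "fourier N g m = (1 / of_nat N) *
     (\<Sum>x\<in>ZN2 N. chi N (- real (fst x * fst m + snd x * snd m)) * complex_of_real (g x))"

definition FR :: "nat \<Rightarrow> (nat \<times> nat \<Rightarrow> real) \<Rightarrow> real" where
  "FR N g = (\<Sum>m\<in>ZN2 N. cmod (fourier N g m)) / sqrt (\<Sum>m\<in>ZN2 N. (cmod (fourier N g m))\<^sup>2)"

end

theory Submission
  imports Defs
begin

text \<open>
  Write \<open>G = fourier N g\<close>, \<open>C = C2_norm f\<close> and \<open>L = L2_norm f\<close>. By Parseval and a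
  Riemann sum comparison for \<open>f\<^sup>2\<close>, the hypothesis \<open>8 C\<^sup>2 \<le> N L\<^sup>2\<close> makes the l2 norm
  of \<open>G\<close> at least \<open>N L / 2\<close>. For the l1 norm, \<open>G (0, 0)\<close> is \<open>N\<close> times a Riemann sum
  of \<open>f\<close>. For \<open>m \<noteq> 0\<close>, a cyclic shift of \<open>g\<close> in the \<open>i\<close>-th coordinate multiplies
  \<open>G m\<close> by a character, so the discrete second difference multiplies it by
  \<open>2 cos (2 pi m\<^sub>i / N) - 2\<close>. Second differences of \<open>g\<close> are at most \<open>2 C / N\<^sup>2\<close>, and
  \<open>2 - 2 cos (2 pi a / N) \<ge> 9 (cdist N a)\<^sup>2 / N\<^sup>2\<close>, where \<open>cdist N a\<close> is the distance
  from \<open>a\<close> to \<open>0\<close> modulo \<open>N\<close>. Hence \<open>|G m| \<le> 2 C N / (9 r(m)\<^sup>2)\<close> for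
  \<open>r(m) = max (cdist N m\<^sub>1) (cdist N m\<^sub>2)\<close>, and the sum of \<open>1 / r(m)\<^sup>2\<close> over \<open>m \<noteq> 0\<close>
  is \<open>O(log N)\<close>.
\<close>

section \<open>Periodic \<open>C\<^sup>2\<close> functions\<close>

definition periodic2 :: "(real \<times> real \<Rightarrow> 'a) \<Rightarrow> bool" where
  "periodic2 F \<longleftrightarrow> (\<forall>x y. F (x + 1, y) = F (x, y)) \<and> (\<forall>x y. F (x, y + 1) = F (x, y))"

lemma deriv_periodic:
  fixes \<phi> :: "real \<Rightarrow> real"
  assumes "\<And>x. \<phi> (x + 1) = \<phi> x"
  shows "deriv \<phi> (x + 1) = deriv \<phi> x"
proof -
  have "(\<lambda>t. \<phi> (t + 1)) = \<phi>" using assms by auto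
  then have "(\<phi> has_field_derivative D) (at (x + 1)) \<longleftrightarrow> (\<phi> has_field_derivative D) (at x)" for D
    using DERIV_shift[of \<phi> D x 1] by simp
  then show ?thesis unfolding deriv_def by simp
qed

lemma periodic2_pd1: "periodic2 F \<Longrightarrow> periodic2 (pd1 F)"
  unfolding periodic2_def pd1_def by (auto intro!: deriv_periodic)

lemma periodic2_pd2: "periodic2 F \<Longrightarrow> periodic2 (pd2 F)"
  unfolding periodic2_def pd2_def by (auto intro!: deriv_periodic)

lemma periodic_add_of_int:
  assumes "\<And>x. \<phi> (x + 1) = \<phi> x"
  shows "\<phi> (x + of_int k) = \<phi> (x :: real)"
proof (induction k rule: int_induct[where k = 0])
  case (step1 i)
  then show ?case using assms[of "x + of_int i"] by (simp add: add.assoc)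
next
  case (step2 i)
  then show ?case using assms[of "x + of_int (i - 1)"] by (simp add: algebra_simps)
qed simp

lemma periodic2_frac:
  assumes "periodic2 F"
  shows "F (x, y) = F (frac x, frac y)"
proof -
  have "F (frac x + of_int \<lfloor>x\<rfloor>, y) = F (frac x, y)"
    using periodic_add_of_int[of "\<lambda>t. F (t, y)"] assms unfolding periodic2_def by simp
  moreover have "F (frac x, frac y + of_int \<lfloor>y\<rfloor>) = F (frac x, frac y)"
    using periodic_add_of_int[of "\<lambda>t. F (frac x, t)"] assms unfolding periodic2_def by simp
  ultimately show ?thesis by (simp add: frac_def)
qed

lemma periodic2_abs_le:
  assumes "periodic2 F" and "\<And>p. p \<in> unit_square \<Longrightarrow> \<bar>F p\<bar> \<le> B"
  shows "\<bar>F p\<bar> \<le> B"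
proof -
  obtain x y where p: "p = (x, y)" by force
  have "(frac x, frac y) \<in> unit_square"
    unfolding unit_square_def by (simp add: frac_ge_0 less_imp_le[OF frac_lt_1])
  then show ?thesis using assms periodic2_frac[OF assms(1)] p by metis
qed

lemma C2_bdd_above:
  assumes "C2 f"
  shows "bdd_above ((\<lambda>p. Max {\<bar>f p\<bar>, \<bar>pd1 f p\<bar>, \<bar>pd2 f p\<bar>,
      \<bar>pd1 (pd1 f) p\<bar>, \<bar>pd2 (pd1 f) p\<bar>, \<bar>pd1 (pd2 f) p\<bar>, \<bar>pd2 (pd2 f) p\<bar>}) ` unit_square)"
proof -
  let ?h = "\<lambda>p. \<bar>f p\<bar> + \<bar>pd1 f p\<bar> + \<bar>pd2 f p\<bar> +
      \<bar>pd1 (pd1 f) p\<bar> + \<bar>pd2 (pd1 f) p\<bar> + \<bar>pd1 (pd2 f) p\<bar> + \<bar>pd2 (pd2 f) p\<bar>"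
  have "continuous_on UNIV ?h"
    using assms unfolding C2_def by (intro continuous_intros) auto
  moreover have "compact unit_square"
    unfolding unit_square_def by (intro compact_Times compact_Icc)
  ultimately have "bounded (?h ` unit_square)"
    by (meson compact_continuous_image compact_imp_bounded continuous_on_subset subset_UNIV)
  then obtain B where B: "\<And>p. p \<in> unit_square \<Longrightarrow> ?h p \<le> B"
    by (meson bounded_imp_bdd_above bdd_above_def imageI)
  show ?thesis
  proof (rule bdd_aboveI2)
    fix p assume "p \<in> unit_square"
    from B[OF this] show "Max {\<bar>f p\<bar>, \<bar>pd1 f p\<bar>, \<bar>pd2 f p\<bar>, \<bar>pd1 (pd1 f) p\<bar>, \<bar>pd2 (pd1 f) p\<bar>,
        \<bar>pd1 (pd2 f) p\<bar>, \<bar>pd2 (pd2 f) p\<bar>} \<le> B"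
      by (intro Max.boundedI) auto
  qed
qed

lemma abs_partials_le_C2_norm:
  assumes "C2 f" and "p \<in> unit_square"
  shows "\<bar>f p\<bar> \<le> C2_norm f" "\<bar>pd1 f p\<bar> \<le> C2_norm f" "\<bar>pd2 f p\<bar> \<le> C2_norm f"
    "\<bar>pd1 (pd1 f) p\<bar> \<le> C2_norm f" "\<bar>pd2 (pd2 f) p\<bar> \<le> C2_norm f"
proof -
  have "Max {\<bar>f p\<bar>, \<bar>pd1 f p\<bar>, \<bar>pd2 f p\<bar>, \<bar>pd1 (pd1 f) p\<bar>, \<bar>pd2 (pd1 f) p\<bar>,
      \<bar>pd1 (pd2 f) p\<bar>, \<bar>pd2 (pd2 f) p\<bar>} \<le> C2_norm f"
    unfolding C2_norm_def by (rule cSUP_upper[OF assms(2) C2_bdd_above[OF assms(1)]])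
  then show "\<bar>f p\<bar> \<le> C2_norm f" "\<bar>pd1 f p\<bar> \<le> C2_norm f" "\<bar>pd2 f p\<bar> \<le> C2_norm f"
      "\<bar>pd1 (pd1 f) p\<bar> \<le> C2_norm f" "\<bar>pd2 (pd2 f) p\<bar> \<le> C2_norm f"
    by (auto simp add: le_max_iff_disj simp del: Max_insert)
qed

lemma C2_continuous: "C2 f \<Longrightarrow> continuous_on UNIV f"
  unfolding C2_def by simp

lemma C2_norm_nonneg: "C2 f \<Longrightarrow> 0 \<le> C2_norm f"
  using abs_partials_le_C2_norm(1)[of f "(0, 0)"] by (simp add: unit_square_def)

lemma abs_partials_le_C2_norm_periodic:
  assumes "C2 f" and "periodic2 f"
  shows "\<bar>f p\<bar> \<le> C2_norm f" "\<bar>pd1 f p\<bar> \<le> C2_norm f" "\<bar>pd2 f p\<bar> \<le> C2_norm f"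
    "\<bar>pd1 (pd1 f) p\<bar> \<le> C2_norm f" "\<bar>pd2 (pd2 f) p\<bar> \<le> C2_norm f"
proof -
  have per: "periodic2 (pd1 f)" "periodic2 (pd2 f)" "periodic2 (pd1 (pd1 f))"
    "periodic2 (pd2 (pd2 f))"
    using assms(2) periodic2_pd1 periodic2_pd2 by blast+
  show "\<bar>f p\<bar> \<le> C2_norm f"
    by (rule periodic2_abs_le[OF assms(2) abs_partials_le_C2_norm(1)[OF assms(1)]])
  show "\<bar>pd1 f p\<bar> \<le> C2_norm f"
    by (rule periodic2_abs_le[OF per(1) abs_partials_le_C2_norm(2)[OF assms(1)]])
  show "\<bar>pd2 f p\<bar> \<le> C2_norm f"
    by (rule periodic2_abs_le[OF per(2) abs_partials_le_C2_norm(3)[OF assms(1)]])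
  show "\<bar>pd1 (pd1 f) p\<bar> \<le> C2_norm f"
    by (rule periodic2_abs_le[OF per(3) abs_partials_le_C2_norm(4)[OF assms(1)]])
  show "\<bar>pd2 (pd2 f) p\<bar> \<le> C2_norm f"
    by (rule periodic2_abs_le[OF per(4) abs_partials_le_C2_norm(5)[OF assms(1)]])
qed

lemma C2_has_partial_derivatives:
  assumes "C2 f"
  shows "((\<lambda>t. f (t, y)) has_real_derivative pd1 f (t, y)) (at t)"
    "((\<lambda>t. pd1 f (t, y)) has_real_derivative pd1 (pd1 f) (t, y)) (at t)"
    "((\<lambda>t. f (x, t)) has_real_derivative pd2 f (x, t)) (at t)"
    "((\<lambda>t. pd2 f (x, t)) has_real_derivative pd2 (pd2 f) (x, t)) (at t)"
  using assms unfolding C2_def has_partials_def pd1_def[of "pd1 f"] pd2_def[of "pd2 f"]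
  by (auto simp: DERIV_deriv_iff_real_differentiable pd1_def pd2_def)

lemma second_difference_bound:
  fixes \<phi> :: "real \<Rightarrow> real"
  assumes d1: "\<And>t. (\<phi> has_real_derivative \<phi>' t) (at t)"
    and d2: "\<And>t. (\<phi>' has_real_derivative \<phi>'' t) (at t)"
    and B: "\<And>t. \<bar>\<phi>'' t\<bar> \<le> B" and h: "0 < h"
  shows "\<bar>\<phi> (x + h) - 2 * \<phi> x + \<phi> (x - h)\<bar> \<le> 2 * h\<^sup>2 * B"
proof -
  obtain z1 where z1: "x < z1" "z1 < x + h" "\<phi> (x + h) - \<phi> x = h * \<phi>' z1"
    using MVT2[of x "x + h" \<phi> \<phi>'] d1 h by auto
  obtain z2 where z2: "x - h < z2" "z2 < x" "\<phi> x - \<phi> (x - h) = h * \<phi>' z2"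
    using MVT2[of "x - h" x \<phi> \<phi>'] d1 h by auto
  have "\<bar>\<phi>' z1 - \<phi>' z2\<bar> \<le> B * \<bar>z1 - z2\<bar>"
    using field_differentiable_bound[of UNIV \<phi>' \<phi>'' B z1 z2] d2 B by auto
  also have "\<dots> \<le> B * (2 * h)"
    using z1 z2 B[of 0] by (intro mult_left_mono) auto
  finally have "h * \<bar>\<phi>' z1 - \<phi>' z2\<bar> \<le> h * (B * (2 * h))"
    using h by (intro mult_left_mono) auto
  moreover have "\<phi> (x + h) - 2 * \<phi> x + \<phi> (x - h) = h * (\<phi>' z1 - \<phi>' z2)"
    using z1(3) z2(3) by (simp add: algebra_simps)
  ultimately show ?thesis using h by (simp add: abs_mult power2_eq_square mult_ac)
qed

lemma C2_second_difference_fst: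
  assumes "C2 f" "periodic2 f" "0 < h"
  shows "\<bar>f (x + h, y) - 2 * f (x, y) + f (x - h, y)\<bar> \<le> 2 * h\<^sup>2 * C2_norm f"
  using second_difference_bound[of "\<lambda>t. f (t, y)" "\<lambda>t. pd1 f (t, y)" "\<lambda>t. pd1 (pd1 f) (t, y)"]
    C2_has_partial_derivatives[OF assms(1)] abs_partials_le_C2_norm_periodic[OF assms(1,2)] assms(3)
      by blast

lemma C2_second_difference_snd:
  assumes "C2 f" "periodic2 f" "0 < h"
  shows "\<bar>f (x, y + h) - 2 * f (x, y) + f (x, y - h)\<bar> \<le> 2 * h\<^sup>2 * C2_norm f"
  using second_difference_bound[of "\<lambda>t. f (x, t)" "\<lambda>t. pd2 f (x, t)" "\<lambda>t. pd2 (pd2 f) (x, t)"]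
    C2_has_partial_derivatives[OF assms(1)] abs_partials_le_C2_norm_periodic[OF assms(1,2)] assms(3)
      by blast

lemma C2_lipschitz:
  assumes "C2 f" "periodic2 f"
  shows "\<bar>f (a, b) - f (c, d)\<bar> \<le> C2_norm f * (\<bar>a - c\<bar> + \<bar>b - d\<bar>)"
proof -
  have "\<bar>f (a, b) - f (c, b)\<bar> \<le> C2_norm f * \<bar>a - c\<bar>"
    using field_differentiable_bound[of UNIV "\<lambda>t. f (t, b)" "\<lambda>t. pd1 f (t, b)" "C2_norm f" a c]
      C2_has_partial_derivatives[OF assms(1)] abs_partials_le_C2_norm_periodic[OF assms] by auto
  moreover have "\<bar>f (c, b) - f (c, d)\<bar> \<le> C2_norm f * \<bar>b - d\<bar>"
    using field_differentiable_bound[of UNIV "\<lambda>t. f (c, t)" "\<lambda>t. pd2 f (c, t)" "C2_norm f" b d]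
      C2_has_partial_derivatives[OF assms(1)] abs_partials_le_C2_norm_periodic[OF assms] by auto
  ultimately show ?thesis
    using abs_triangle_ineq[of "f (a, b) - f (c, b)" "f (c, b) - f (c, d)"]
    by (simp add: distrib_left)
qed

section \<open>Integrals and Riemann sums over the unit square\<close>

lemma sum_ZN2: "(\<Sum>m\<in>ZN2 N. h m) = (\<Sum>a<N. \<Sum>b<N. h (a, b))"
  unfolding ZN2_def by (simp add: atLeast0LessThan sum.cartesian_product)

lemma card_ZN2: "card (ZN2 N) = N * N"
  unfolding ZN2_def by (simp add: card_cartesian_product)

definition cell :: "nat \<Rightarrow> nat \<times> nat \<Rightarrow> (real \<times> real) set" where
  "cell N x = {real (fst x) / N .. (real (fst x) + 1) / N} \<times>
    {real (snd x) / N .. (real (snd x) + 1) / N}"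

lemma cell_cbox:
  "cell N x =
    cbox (real (fst x) / N, real (snd x) / N) ((real (fst x) + 1) / N, (real (snd x) + 1) / N)"
  unfolding cell_def by (simp add: cbox_Pair_eq)

lemma content_cell: "0 < N \<Longrightarrow> Henstock_Kurzweil_Integration.content (cell N x) = 1 / (real N)\<^sup>2"
  unfolding cell_cbox content_Pair by (simp add: content_real divide_simps power2_eq_square)

lemma inj_on_cell: "0 < N \<Longrightarrow> inj_on (cell N) A"
proof (rule inj_onI)
  fix x y assume N: "0 < N" and eq: "cell N x = cell N y"
  have corner: "(real (fst z) / N, real (snd z) / N) \<in> cell N z" for z
    using N unfolding cell_def by (auto simp: divide_simps)
  have "(real (fst x) / N, real (snd x) / N) \<in> cell N y"
      "(real (fst y) / N, real (snd y) / N) \<in> cell N x"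
    using corner[of x] corner[of y] eq by simp_all
  then have "real (fst y) / N \<le> real (fst x) / N" "real (snd y) / N \<le> real (snd x) / N"
      "real (fst x) / N \<le> real (fst y) / N" "real (snd x) / N \<le> real (snd y) / N"
    unfolding cell_def by auto
  then have "real (fst x) / N = real (fst y) / N" "real (snd x) / N = real (snd y) / N"
    by linarith+
  then show "x = y" using N by (simp add: prod_eq_iff)
qed

lemma unit_interval_grid_cell:
  assumes "0 \<le> a" "a \<le> 1" "0 < N"
  obtains i where "i < N" "real i / N \<le> a" "a \<le> (real i + 1) / N"
proof -
  define i where "i = min (N - 1) (nat \<lfloor>real N * a\<rfloor>)"
  have "real i \<le> real N * a" "real N * a \<le> real i + 1" "i < N"
    using assms floor_le_iff[of "real N * a"] unfolding i_def
    by (auto simp: min_def of_nat_diff le_nat_iff) linarith+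
  then show ?thesis using that assms by (simp add: divide_simps mult.commute)
qed

lemma cell_subset_unit_square:
  assumes "x \<in> ZN2 N"
  shows "cell N x \<subseteq> unit_square"
proof -
  obtain i j where x: "x = (i, j)" "i < N" "j < N" using assms unfolding ZN2_def by auto
  have grid: "{real k / N .. (real k + 1) / N} \<subseteq> {0..1}" if "k < N" for k
    using that by (auto simp: divide_le_eq_1)
  show ?thesis
    unfolding x(1) cell_def unit_square_def fst_conv snd_conv
    by (rule Sigma_mono[OF grid[OF x(2)] grid[OF x(3)]])
qed

lemma unit_square_subset_cells:
  assumes N: "0 < N"
  shows "unit_square \<subseteq> \<Union> (cell N ` ZN2 N)"
proof
  fix p assume "p \<in> unit_square"
  then obtain a b where p: "p = (a, b)" "0 \<le> a" "a \<le> 1" "0 \<le> b" "b \<le> 1"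
    unfolding unit_square_def by auto
  obtain i where "i < N" "real i / N \<le> a" "a \<le> (real i + 1) / N"
    using unit_interval_grid_cell[OF p(2,3) N] .
  moreover obtain j where "j < N" "real j / N \<le> b" "b \<le> (real j + 1) / N"
    using unit_interval_grid_cell[OF p(4,5) N] .
  ultimately have "(i, j) \<in> ZN2 N" "p \<in> cell N (i, j)" using p unfolding ZN2_def cell_def by auto
  then show "p \<in> \<Union> (cell N ` ZN2 N)" by blast
qed

lemma cell_division:
  assumes N: "0 < N"
  shows "(cell N ` ZN2 N) division_of unit_square"
proof (rule division_ofI)
  show "finite (cell N ` ZN2 N)" unfolding ZN2_def by simp
next
  fix K assume "K \<in> cell N ` ZN2 N"
  then obtain x where x: "x \<in> ZN2 N" "K = cell N x" by blast
  then show "K \<subseteq> unit_square" "\<exists>a b. K = cbox a b"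
    using cell_subset_unit_square cell_cbox by blast+
  show "K \<noteq> {}" using x N unfolding cell_def by (auto simp: divide_simps)
next
  fix K1 K2 assume "K1 \<in> cell N ` ZN2 N" "K2 \<in> cell N ` ZN2 N" "K1 \<noteq> K2"
  then obtain x y where xy: "K1 = cell N x" "K2 = cell N y" "x \<noteq> y" by blast
  have same_interval: "i = j"
    if "real i / N < t" "t < (real i + 1) / N" "real j / N < t" "t < (real j + 1) / N"
    for i j :: nat and t :: real
  proof -
    have "real i < N * t" "N * t < real i + 1" "real j < N * t" "N * t < real j + 1"
      using that N by (auto simp: divide_simps mult.commute)
    then show ?thesis by linarith
  qed
  show "interior K1 \<inter> interior K2 = {}"
  proof (rule ccontr)
    assume "interior K1 \<inter> interior K2 \<noteq> {}"
    then obtain a b where "(a, b) \<in> interior K1" "(a, b) \<in> interior K2" by auto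
    then have "fst x = fst y" "snd x = snd y"
      unfolding xy cell_def interior_Times interior_atLeastAtMost_real using same_interval by auto
    then show False using xy(3) by (simp add: prod_eq_iff)
  qed
next
  show "\<Union> (cell N ` ZN2 N) = unit_square"
    using unit_square_subset_cells[OF N] cell_subset_unit_square by blast
qed

lemma integral_unit_square_cells:
  fixes F :: "real \<times> real \<Rightarrow> real"
  assumes N: "0 < N" and cont: "continuous_on UNIV F"
  shows "integral unit_square F = (\<Sum>x\<in>ZN2 N. integral (cell N x) F)"
proof -
  have "(F has_integral integral K F) K" if "K \<in> cell N ` ZN2 N" for K
    using that cell_cbox continuous_on_subset[OF cont]
    by (auto intro!: integrable_integral integrable_continuous)
  then have "(F has_integral (\<Sum>K\<in>cell N ` ZN2 N. integral K F)) unit_square"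
    by (rule has_integral_combine_division[OF cell_division[OF N]])
  then show ?thesis
    using sum.reindex[OF inj_on_cell[OF N], of "\<lambda>K. integral K F" "ZN2 N"]
    by (simp add: integral_unique)
qed

lemma cell_integral_error:
  fixes F :: "real \<times> real \<Rightarrow> real"
  assumes N: "0 < N" and cont: "continuous_on UNIV F"
    and lip: "\<And>a b c d. \<bar>F (a, b) - F (c, d)\<bar> \<le> L * (\<bar>a - c\<bar> + \<bar>b - d\<bar>)"
  shows "\<bar>F (real (fst x) / N, real (snd x) / N) - (real N)\<^sup>2 * integral (cell N x) F\<bar> \<le> 2 * L / N"
proof -
  define c where "c = F (real (fst x) / N, real (snd x) / N)"
  have L: "0 \<le> L" using lip[of 1 0 0 0] by simp
  have "(F has_integral integral (cell N x) F) (cell N x)"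
    unfolding cell_cbox using continuous_on_subset[OF cont]
    by (auto intro!: integrable_integral integrable_continuous)
  then have hi: "((\<lambda>p. F p - c) has_integral
      (integral (cell N x) F - Henstock_Kurzweil_Integration.content (cell N x) * c)) (cell N x)"
    using has_integral_diff[OF _ has_integral_const, of F _ _ _ c] unfolding cell_cbox by simp
  have "norm (F p - c) \<le> 2 * L / N" if "p \<in> cell N x" for p
  proof -
    obtain a b where ab: "p = (a, b)" by force
    have "\<bar>a - real (fst x) / N\<bar> \<le> 1 / N" "\<bar>b - real (snd x) / N\<bar> \<le> 1 / N"
      using that N unfolding ab cell_def by (auto simp: divide_simps)
    then have "L * (\<bar>a - real (fst x) / N\<bar> + \<bar>b - real (snd x) / N\<bar>) \<le> L * (2 / N)"
      using L by (intro mult_left_mono) auto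
    then show ?thesis using lip[of a b "real (fst x) / N" "real (snd x) / N"] unfolding ab c_def
      by (simp add: mult.commute)
  qed
  then have "norm (integral (cell N x) F - Henstock_Kurzweil_Integration.content (cell N x) * c)
      \<le> 2 * L / N * Henstock_Kurzweil_Integration.content (cell N x)"
    using has_integral_bound[of "2 * L / N" "\<lambda>p. F p - c"] hi L unfolding cell_cbox by simp
  then have "\<bar>integral (cell N x) F - c / (real N)\<^sup>2\<bar> \<le> 2 * L / N / (real N)\<^sup>2"
    using content_cell[OF N] by simp
  then have "(real N)\<^sup>2 * \<bar>integral (cell N x) F - c / (real N)\<^sup>2\<bar> \<le> 2 * L / N"
    using N by (simp add: divide_simps mult.commute)
  moreover have "(real N)\<^sup>2 * \<bar>integral (cell N x) F - c / (real N)\<^sup>2\<bar> =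
      \<bar>c - (real N)\<^sup>2 * integral (cell N x) F\<bar>"
    using N by (simp add: abs_mult[symmetric] field_simps abs_minus_commute)
  ultimately show ?thesis unfolding c_def by simp
qed

lemma riemann_sum_error:
  fixes F :: "real \<times> real \<Rightarrow> real"
  assumes N: "0 < N" and cont: "continuous_on UNIV F"
    and lip: "\<And>a b c d. \<bar>F (a, b) - F (c, d)\<bar> \<le> L * (\<bar>a - c\<bar> + \<bar>b - d\<bar>)"
  shows "\<bar>(\<Sum>x\<in>ZN2 N. F (real (fst x) / N, real (snd x) / N)) - (real N)\<^sup>2 * integral unit_square F\<bar>
    \<le> 2 * L * N"
proof -
  have "\<bar>(\<Sum>x\<in>ZN2 N. F (real (fst x) / N, real (snd x) / N)) - (real N)\<^sup>2 * integral unit_square F\<bar>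
      = \<bar>\<Sum>x\<in>ZN2 N. F (real (fst x) / N, real (snd x) / N) - (real N)\<^sup>2 * integral (cell N x) F\<bar>"
    unfolding integral_unit_square_cells[OF N cont] by (simp add: sum_subtractf sum_distrib_left)
  also have "\<dots> \<le> (\<Sum>x\<in>ZN2 N. 2 * L / N)"
    by (rule order_trans[OF sum_abs sum_mono]) (rule cell_integral_error[OF N cont lip])
  also have "\<dots> = 2 * L * N"
    using N by (simp add: card_ZN2 power2_eq_square)
  finally show ?thesis .
qed

lemma unit_square_cbox: "unit_square = cbox (0, 0) (1, 1)"
  unfolding unit_square_def by (simp add: cbox_Pair_eq)

lemma has_integral_integral_unit_square:
  fixes F :: "real \<times> real \<Rightarrow> real"
  assumes "continuous_on UNIV F"
  shows "(F has_integral integral unit_square F) unit_square"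
  unfolding unit_square_cbox using continuous_on_subset[OF assms]
  by (auto intro!: integrable_integral integrable_continuous)

lemma square_integral_le_L2_norm_sq:
  assumes cont: "continuous_on UNIV F"
  shows "(integral unit_square F)\<^sup>2 \<le> L2_norm_sq F"
proof -
  define I where "I = integral unit_square F"
  have "((\<lambda>p. (F p)\<^sup>2) has_integral L2_norm_sq F) unit_square"
    unfolding L2_norm_sq_def
    by (rule has_integral_integral_unit_square) (intro continuous_intros cont)
  moreover have "((\<lambda>p. 2 * I * F p) has_integral 2 * I * I) unit_square"
    unfolding I_def by (intro has_integral_mult_right has_integral_integral_unit_square cont)
  moreover have "((\<lambda>p. I\<^sup>2) has_integral I\<^sup>2) unit_square"
    using has_integral_const[of "I\<^sup>2" "(0::real, 0::real)" "(1, 1)"]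
    unfolding unit_square_cbox by (simp add: content_Pair)
  ultimately have "((\<lambda>p. (F p)\<^sup>2 - 2 * I * F p + I\<^sup>2)
      has_integral L2_norm_sq F - 2 * I * I + I\<^sup>2) unit_square"
    by (intro has_integral_add has_integral_diff)
  moreover have "0 \<le> (F p)\<^sup>2 - 2 * I * F p + I\<^sup>2" for p
    using zero_le_power2[of "F p - I"] unfolding power2_diff by (simp add: mult_ac)
  ultimately have "0 \<le> L2_norm_sq F - 2 * I * I + I\<^sup>2"
    by (rule has_integral_nonneg)
  then show ?thesis unfolding I_def by (simp add: power2_eq_square)
qed

lemma abs_integral_le_L2_norm:
  "continuous_on UNIV F \<Longrightarrow> \<bar>integral unit_square F\<bar> \<le> L2_norm F"
  unfolding L2_norm_def using real_sqrt_le_mono[OF square_integral_le_L2_norm_sq] by simp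

section \<open>Characters and the discrete Fourier transform\<close>

lemma chi_add: "chi N (a + b) = chi N a * chi N b"
  unfolding chi_def by (simp add: exp_add[symmetric] distrib_left add_divide_distrib)

lemma chi_zero [simp]: "chi N 0 = 1"
  unfolding chi_def by simp

lemma cnj_chi: "cnj (chi N a) = chi N (- a)"
  unfolding chi_def by (simp add: exp_cnj)

lemma norm_chi [simp]: "norm (chi N a) = 1"
proof -
  have "chi N a = exp (\<i> * complex_of_real (2 * pi * a / real N))"
    unfolding chi_def by (simp add: mult_ac)
  then show ?thesis by simp
qed

lemma chi_of_int_mult_self: "0 < N \<Longrightarrow> chi N (of_int k * real N) = 1"
  unfolding chi_def by (simp add: exp_integer_2pi mult_ac)

lemma chi_add_chi_uminus: "chi N a + chi N (- a) = of_real (2 * cos (2 * pi * a / N))"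
proof -
  have "chi N a + chi N (- a) = of_real (2 * Re (chi N a))"
    by (simp add: complex_add_cnj cnj_chi[symmetric])
  also have "Re (chi N a) = cos (2 * pi * a / N)" unfolding chi_def by (simp add: Re_exp)
  finally show ?thesis .
qed

lemma sum_chi_geometric:
  assumes N: "0 < N" and k: "\<bar>k\<bar> < int N"
  shows "(\<Sum>j<N. chi N (of_int k * real j)) = (if k = 0 then of_nat N else 0)"
proof (cases "k = 0")
  case False
  define w where "w = chi N (of_int k)"
  have pow: "chi N (of_int k * real j) = w ^ j" for j
    unfolding w_def chi_def by (simp add: exp_of_nat_mult[symmetric] mult_ac)
  have "w \<noteq> 1"
  proof
    assume "w = 1"
    then have "exp (complex_of_real (2 * pi * of_int k / real N) * \<i>) = 1"
      unfolding w_def chi_def by (simp add: mult_ac)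
    then obtain n :: int where "2 * pi * of_int k / real N = of_int (2 * n) * pi"
      by (auto simp: exp_eq_1)
    then have "of_int k = of_int n * real N" using N by (simp add: field_simps)
    then have "k = n * int N" by (metis of_int_eq_iff of_int_mult of_int_of_nat_eq)
    then show False using k False by (auto simp: abs_mult)
  qed
  moreover have "w ^ N = 1" using chi_of_int_mult_self[OF N, of k] pow[of N] by simp
  ultimately show ?thesis using False geometric_sum[of w N] by (simp add: pow)
qed simp

definition wave :: "nat \<Rightarrow> nat \<times> nat \<Rightarrow> nat \<times> nat \<Rightarrow> complex" where
  "wave N x m = chi N (- real (fst x * fst m + snd x * snd m))"

lemma fourier_wave:
  "fourier N g m = (1 / of_nat N) * (\<Sum>x\<in>ZN2 N. wave N x m * complex_of_real (g x))"
  unfolding fourier_def wave_def by simp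

lemma wave_orthogonal:
  assumes N: "0 < N" and x: "x \<in> ZN2 N" and y: "y \<in> ZN2 N"
  shows "(\<Sum>m\<in>ZN2 N. wave N x m * cnj (wave N y m)) = (if x = y then (of_nat N)\<^sup>2 else 0)"
proof -
  define k1 where "k1 = int (fst y) - int (fst x)"
  define k2 where "k2 = int (snd y) - int (snd x)"
  have k: "\<bar>k1\<bar> < int N" "\<bar>k2\<bar> < int N" using x y unfolding k1_def k2_def ZN2_def by auto
  have "wave N x m * cnj (wave N y m)
      = chi N (of_int k1 * real (fst m)) * chi N (of_int k2 * real (snd m))" for m
  proof -
    have "- real (fst x * fst m + snd x * snd m) + real (fst y * fst m + snd y * snd m)
        = of_int k1 * real (fst m) + of_int k2 * real (snd m)"
      unfolding k1_def k2_def by (simp add: algebra_simps)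
    then show ?thesis unfolding wave_def cnj_chi minus_minus by (simp only: chi_add[symmetric])
  qed
  then have "(\<Sum>m\<in>ZN2 N. wave N x m * cnj (wave N y m))
      = (\<Sum>a<N. chi N (of_int k1 * real a)) * (\<Sum>b<N. chi N (of_int k2 * real b))"
    unfolding sum_ZN2 by (simp add: sum_product)
  also have "\<dots> = (if x = y then (of_nat N)\<^sup>2 else 0)"
  proof -
    have "x = y \<longleftrightarrow> k1 = 0 \<and> k2 = 0" unfolding k1_def k2_def prod_eq_iff by auto
    then show ?thesis
      unfolding sum_chi_geometric[OF N k(1)] sum_chi_geometric[OF N k(2)]
      by (simp add: power2_eq_square)
  qed
  finally show ?thesis .
qed

lemma parseval:
  assumes N: "0 < N"
  shows "(\<Sum>m\<in>ZN2 N. (cmod (fourier N g m))\<^sup>2) = (\<Sum>x\<in>ZN2 N. (g x)\<^sup>2)"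
proof -
  let ?Z = "ZN2 N"
  let ?c = "\<lambda>x y m. complex_of_real (g x * g y) * (wave N x m * cnj (wave N y m))"
  have fin: "finite ?Z" unfolding ZN2_def by simp
  have sq: "complex_of_real ((cmod (fourier N g m))\<^sup>2)
      = (1 / (of_nat N)\<^sup>2) * (\<Sum>x\<in>?Z. \<Sum>y\<in>?Z. ?c x y m)"
    for m
  proof -
    have "complex_of_real ((cmod (fourier N g m))\<^sup>2) = fourier N g m * cnj (fourier N g m)"
      by (rule complex_norm_square)
    also have "\<dots> = (1 / (of_nat N)\<^sup>2) * (\<Sum>x\<in>?Z. \<Sum>y\<in>?Z. ?c x y m)"
      unfolding fourier_wave by (simp add: power2_eq_square sum_product mult_ac)
    finally show ?thesis .
  qed
  have "(\<Sum>m\<in>?Z. \<Sum>x\<in>?Z. \<Sum>y\<in>?Z. ?c x y m) = (\<Sum>x\<in>?Z. \<Sum>y\<in>?Z. \<Sum>m\<in>?Z. ?c x y m)"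
    by (subst sum.swap) (rule sum.cong[OF refl], rule sum.swap)
  also have "\<dots> = (\<Sum>x\<in>?Z. complex_of_real (g x * g x) * (of_nat N)\<^sup>2)"
  proof (rule sum.cong[OF refl])
    fix x assume x: "x \<in> ?Z"
    have "(\<Sum>y\<in>?Z. \<Sum>m\<in>?Z. ?c x y m)
        = (\<Sum>y\<in>?Z. if x = y then complex_of_real (g x * g y) * (of_nat N)\<^sup>2 else 0)"
      using x by (intro sum.cong refl) (simp add: wave_orthogonal[OF N] flip: sum_distrib_left)
    also have "\<dots> = complex_of_real (g x * g x) * (of_nat N)\<^sup>2"
      using fin x by simp
    finally show "(\<Sum>y\<in>?Z. \<Sum>m\<in>?Z. ?c x y m) = complex_of_real (g x * g x) * (of_nat N)\<^sup>2" .
  qed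
  also have "\<dots> = complex_of_real (\<Sum>x\<in>?Z. (g x)\<^sup>2) * (of_nat N)\<^sup>2"
    by (simp add: sum_distrib_right power2_eq_square)
  finally have inner: "(\<Sum>m\<in>?Z. \<Sum>x\<in>?Z. \<Sum>y\<in>?Z. ?c x y m)
      = complex_of_real (\<Sum>x\<in>?Z. (g x)\<^sup>2) * (of_nat N)\<^sup>2" .
  have "complex_of_real (\<Sum>m\<in>?Z. (cmod (fourier N g m))\<^sup>2)
      = (1 / (of_nat N)\<^sup>2) * (\<Sum>m\<in>?Z. \<Sum>x\<in>?Z. \<Sum>y\<in>?Z. ?c x y m)"
    by (simp only: of_real_sum sq sum_distrib_left)
  also have "\<dots> = complex_of_real (\<Sum>x\<in>?Z. (g x)\<^sup>2)"
    unfolding inner using N by simp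
  finally show ?thesis by (simp only: of_real_eq_iff)
qed

lemma sum_lessThan_shift_periodic:
  fixes h :: "nat \<Rightarrow> 'a::cancel_comm_monoid_add"
  assumes "\<And>j. h (j + N) = h j"
  shows "(\<Sum>j<N. h (j + k)) = (\<Sum>j<N. h j)"
proof (induction k)
  case (Suc k)
  have "(\<Sum>j<N. h (Suc j + k)) + h k = h (0 + k) + (\<Sum>j<N. h (Suc j + k))"
    using assms[of k] by (simp add: add.commute)
  also have "\<dots> = (\<Sum>j<Suc N. h (j + k))" by (rule sum.lessThan_Suc_shift[symmetric])
  also have "\<dots> = (\<Sum>j<N. h (j + k)) + h k" using assms[of k] by (simp add: add.commute)
  finally show ?case using Suc by simp
qed simp

lemma norm_fourier_le:
  assumes "\<And>x. x \<in> ZN2 N \<Longrightarrow> \<bar>h x\<bar> \<le> B"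
  shows "cmod (fourier N h m) \<le> N * B"
proof -
  have "cmod (fourier N h m) = (1 / N) * cmod (\<Sum>x\<in>ZN2 N. wave N x m * complex_of_real (h x))"
    unfolding fourier_wave norm_mult by (simp add: norm_divide)
  also have "\<dots> \<le> (1 / N) * (\<Sum>x\<in>ZN2 N. cmod (wave N x m * complex_of_real (h x)))"
    by (intro mult_left_mono norm_sum) simp
  also have "\<dots> \<le> (1 / N) * (\<Sum>x\<in>ZN2 N. B)"
    unfolding wave_def using assms by (intro mult_left_mono sum_mono) (auto simp: norm_mult)
  also have "\<dots> = N * B" by (simp add: card_ZN2)
  finally show ?thesis .
qed

lemma wave_shift_fst: "wave N (a, b) m = chi N (real k * real (fst m)) * wave N (a + k, b) m"
  unfolding wave_def by (simp add: chi_add[symmetric] algebra_simps)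

lemma wave_periodic_fst: "0 < N \<Longrightarrow> wave N (a + N, b) m = wave N (a, b) m"
  using wave_shift_fst[of N a b m N] chi_of_int_mult_self[of N "int (fst m)"]
  by (simp add: mult.commute)

lemma fourier_shift_fst:
  assumes N: "0 < N" and per: "\<And>a b. g (a + N, b) = g (a, b)"
  shows "fourier N (\<lambda>x. g (fst x + k, snd x)) m = chi N (real k * real (fst m)) * fourier N g m"
proof -
  define h where "h a = (\<Sum>b<N. wave N (a, b) m * complex_of_real (g (a, b)))" for a
  have "h (a + N) = h a" for a unfolding h_def using wave_periodic_fst[OF N] per by simp
  then have "(\<Sum>a<N. h (a + k)) = (\<Sum>a<N. h a)" by (rule sum_lessThan_shift_periodic)
  moreover have "(\<Sum>x\<in>ZN2 N. wave N x m * complex_of_real (g (fst x + k, snd x)))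
      = chi N (real k * real (fst m)) * (\<Sum>a<N. h (a + k))"
    unfolding sum_ZN2 h_def
    by (subst wave_shift_fst[where k = k]) (simp add: sum_distrib_left mult_ac)
  ultimately show ?thesis unfolding fourier_wave sum_ZN2 h_def by simp
qed

lemma fourier_swap: "fourier N (\<lambda>x. g (prod.swap x)) (prod.swap m) = fourier N g m"
proof -
  have "wave N (prod.swap x) (prod.swap m) = wave N x m" for x
    unfolding wave_def by (simp add: add.commute)
  then have "(\<Sum>x\<in>ZN2 N. wave N x (prod.swap m) * complex_of_real (g (prod.swap x)))
      = (\<Sum>x\<in>ZN2 N. wave N x m * complex_of_real (g x))"
    by (intro sum.reindex_bij_witness[of _ prod.swap prod.swap]) (auto simp: ZN2_def)
  then show ?thesis unfolding fourier_wave by simp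
qed

text \<open>Indices live in \<open>{0..<N}\<close>, so \<open>a + (N - 1)\<close> plays the role of \<open>a - 1\<close> modulo \<open>N\<close>.\<close>

lemma fourier_second_difference_fst:
  assumes N: "0 < N" and per: "\<And>a b. g (a + N, b) = g (a, b)"
    and D: "\<And>a b. \<bar>g (a + 1, b) - 2 * g (a, b) + g (a + (N - 1), b)\<bar> \<le> B"
  shows "(2 - 2 * cos (2 * pi * real (fst m) / N)) * cmod (fourier N g m) \<le> N * B"
proof -
  define \<Delta> where "\<Delta> x = g (fst x + 1, snd x) - 2 * g x + g (fst x + (N - 1), snd x)" for x
  have "chi N (real (N - 1) * real (fst m))
      = chi N (- real (fst m)) * chi N (of_int (int (fst m)) * real N)"
    using N by (simp add: chi_add[symmetric] of_nat_diff algebra_simps)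
  then have reflect: "chi N (real (N - 1) * real (fst m)) = chi N (- real (fst m))"
    using chi_of_int_mult_self[OF N, of "int (fst m)"] by simp
  have "fourier N \<Delta> m = fourier N (\<lambda>x. g (fst x + 1, snd x)) m - 2 * fourier N g m
      + fourier N (\<lambda>x. g (fst x + (N - 1), snd x)) m"
    unfolding \<Delta>_def fourier_def
    by (simp add: sum.distrib sum_subtractf sum_distrib_left algebra_simps)
  also have "\<dots> = (chi N (real (fst m)) + chi N (- real (fst m)) - 2) * fourier N g m"
    unfolding fourier_shift_fst[OF N per] reflect by (simp add: algebra_simps)
  also have "\<dots> = - complex_of_real (2 - 2 * cos (2 * pi * real (fst m) / N)) * fourier N g m"
    unfolding chi_add_chi_uminus by simp
  finally have "cmod (fourier N \<Delta> m)
      = \<bar>2 - 2 * cos (2 * pi * real (fst m) / N)\<bar> * cmod (fourier N g m)"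
    by (simp only: norm_mult norm_minus_cancel norm_of_real)
  then have "(2 - 2 * cos (2 * pi * real (fst m) / N)) * cmod (fourier N g m)
      = cmod (fourier N \<Delta> m)"
    by simp
  also have "\<dots> \<le> N * B"
    by (rule norm_fourier_le) (use D in \<open>auto simp: \<Delta>_def simp del: One_nat_def\<close>)
  finally show ?thesis .
qed

lemma fourier_second_difference_snd:
  assumes N: "0 < N" and per: "\<And>a b. g (a, b + N) = g (a, b)"
    and D: "\<And>a b. \<bar>g (a, b + 1) - 2 * g (a, b) + g (a, b + (N - 1))\<bar> \<le> B"
  shows "(2 - 2 * cos (2 * pi * real (snd m) / N)) * cmod (fourier N g m) \<le> N * B"
  using fourier_second_difference_fst[OF N, of "\<lambda>x. g (prod.swap x)" B "prod.swap m"] per D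
  unfolding fourier_swap by simp

section \<open>Lattice sums\<close>

lemma sin_ge_half:
  fixes x :: real
  assumes "0 \<le> x" "x \<le> 8/5"
  shows "x / 2 \<le> sin x"
proof -
  have "\<bar>sin x - (\<Sum>m<3. sin_coeff m * x ^ m)\<bar> \<le> inverse (fact 3) * \<bar>x\<bar> ^ 3"
    by (rule Maclaurin_sin_bound)
  then have "\<bar>sin x - x\<bar> \<le> x ^ 3 / 6"
    using assms(1) by (simp add: eval_nat_numeral sin_coeff_def)
  then have "x - x ^ 3 / 6 \<le> sin x" by linarith
  moreover have "x * x \<le> 3"
    using mult_mono[OF assms(2) assms(2)] assms(1) by simp
  then have "x ^ 3 / 6 \<le> x / 2"
    using assms(1) mult_left_mono[of "x * x" 3 x] by (simp add: power3_eq_cube mult_ac)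
  ultimately show ?thesis by linarith
qed

lemma nine_le_pi_square: "9 \<le> pi\<^sup>2"
  using pi_gt3 power_mono[of 3 pi 2] by simp

definition cdist :: "nat \<Rightarrow> nat \<Rightarrow> nat" where
  "cdist N a = min a (N - a)"

lemma cdist_eq_0_iff: "a < N \<Longrightarrow> cdist N a = 0 \<longleftrightarrow> a = 0"
  unfolding cdist_def by auto

lemma two_minus_two_cos_ge_cdist:
  assumes N: "0 < N" and a: "a < N"
  shows "9 * (real (cdist N a))\<^sup>2 / (real N)\<^sup>2 \<le> 2 - 2 * cos (2 * pi * real a / N)"
proof -
  define y where "y = pi * real a / N"
  define z where "z = pi * real (cdist N a) / N"
  have "2 - 2 * cos (2 * pi * real a / N) = 4 * (sin y)\<^sup>2"
    using cos_double_sin[of y] unfolding y_def by (simp add: mult_ac)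
  moreover have "sin z = sin y"
  proof (cases "a \<le> N - a")
    case False
    then have "z = pi - y" unfolding z_def y_def cdist_def using a N
      by (simp add: of_nat_diff field_simps)
    then show ?thesis by simp
  qed (simp add: z_def y_def cdist_def)
  moreover have z: "0 \<le> z" "z \<le> 8/5"
  proof -
    have "real (cdist N a) / N \<le> 1/2" using N unfolding cdist_def by (simp add: divide_simps)
    then have "z \<le> pi / 2" unfolding z_def using pi_gt_zero mult_left_mono[of _ "1/2" pi]
      by fastforce
    then show "z \<le> 8/5" using pi_approx by simp
  qed (simp add: z_def)
  then have "(z / 2)\<^sup>2 \<le> (sin z)\<^sup>2" using sin_ge_half by (intro power_mono) auto
  moreover have "9 * (real (cdist N a))\<^sup>2 / (real N)\<^sup>2 \<le> z\<^sup>2"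
    unfolding z_def power_mult_distrib power_divide
    using nine_le_pi_square by (intro divide_right_mono mult_right_mono) auto
  ultimately show ?thesis by (simp add: power_divide)
qed

lemma harm_le_one_plus_ln: "1 \<le> n \<Longrightarrow> harm n \<le> 1 + ln (real n)"
  using decseq_harm_diff_ln[unfolded decseq_def, rule_format, of 0 "n - 1"]
  by (simp add: harm_def)

lemma sum_cdist_le:
  fixes F :: "nat \<Rightarrow> real"
  assumes F: "\<And>u. 0 \<le> F u"
  shows "(\<Sum>a<N. F (cdist N a)) \<le> 2 * (\<Sum>u\<le>N. F u)"
proof -
  have "(\<Sum>a<N. F (cdist N a)) \<le> (\<Sum>a<N. F a) + (\<Sum>a<N. F (N - a))"
    unfolding sum.distrib[symmetric] cdist_def by (intro sum_mono) (simp add: min_def F)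
  also have "(\<Sum>a<N. F a) \<le> (\<Sum>u\<le>N. F u)" by (intro sum_mono2) (auto simp: F)
  also have "(\<Sum>a<N. F (N - a)) = (\<Sum>u\<in>(\<lambda>a. N - a) ` {..<N}. F u)"
    by (rule sum.reindex[symmetric, unfolded comp_def]) (auto intro: inj_onI)
  also have "\<dots> \<le> (\<Sum>u\<le>N. F u)" by (intro sum_mono2) (auto simp: F)
  finally show ?thesis by simp
qed

text \<open>Since \<open>1 / 0 = 0\<close>, the terms with \<open>max u v = 0\<close>, resp. \<open>m = (0, 0)\<close>, of the
  following sums vanish.\<close>

lemma sum_inv_max_square_le: "(\<Sum>u\<le>N. \<Sum>v\<le>N. 1 / (real (max u v))\<^sup>2) \<le> 4 * harm N"
proof -
  define A where "A u v = (if v \<le> u then 1 / (real u)\<^sup>2 else 0)" for u v :: nat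
  have "(\<Sum>v\<le>N. A u v) \<le> 2 / real u" if "u \<le> N" for u
  proof -
    have "(\<Sum>v\<le>N. A u v) = (\<Sum>v\<in>{..u}. 1 / (real u)\<^sup>2)"
      unfolding A_def using that by (intro sum.mono_neutral_cong_right) auto
    also have "\<dots> = (real u + 1) / (real u)\<^sup>2" by simp
    also have "\<dots> \<le> 2 / real u"
      by (cases "u = 0") (simp_all add: field_simps power2_eq_square)
    finally show ?thesis .
  qed
  then have A: "(\<Sum>u\<le>N. \<Sum>v\<le>N. A u v) \<le> 2 * harm N"
    using sum_mono[of "{..N}" "\<lambda>u. \<Sum>v\<le>N. A u v" "\<lambda>u. 2 / real u"]
    by (simp add: harm_def atLeast1_atMost_eq_remove0 sum.remove[of "{..N}" 0]
        sum_distrib_left[symmetric] divide_inverse)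
  have "(\<Sum>u\<le>N. \<Sum>v\<le>N. 1 / (real (max u v))\<^sup>2) \<le> (\<Sum>u\<le>N. \<Sum>v\<le>N. A u v + A v u)"
    unfolding A_def max_def by (intro sum_mono) auto
  also have "\<dots> = (\<Sum>u\<le>N. \<Sum>v\<le>N. A u v) + (\<Sum>v\<le>N. \<Sum>u\<le>N. A v u)"
    by (simp add: sum.distrib sum.swap[of "\<lambda>u v. A v u"])
  finally show ?thesis using A by simp
qed

lemma sum_cdist_inv_max_square_le:
  assumes N: "2 \<le> N"
  shows "(\<Sum>m\<in>ZN2 N. 1 / (real (max (cdist N (fst m)) (cdist N (snd m))))\<^sup>2) \<le> 40 * ln N"
proof -
  let ?\<psi> = "\<lambda>u v. 1 / (real (max u v))\<^sup>2"
  have "(\<Sum>m\<in>ZN2 N. ?\<psi> (cdist N (fst m)) (cdist N (snd m)))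
      = (\<Sum>a<N. \<Sum>b<N. ?\<psi> (cdist N a) (cdist N b))"
    by (simp add: sum_ZN2)
  also have "\<dots> \<le> (\<Sum>a<N. 2 * (\<Sum>v\<le>N. ?\<psi> (cdist N a) v))"
    by (intro sum_mono sum_cdist_le) simp
  also have "\<dots> = 2 * (\<Sum>v\<le>N. \<Sum>a<N. ?\<psi> v (cdist N a))"
    by (simp add: sum_distrib_left sum.swap[of _ "{..N}"] max.commute)
  also have "\<dots> \<le> 2 * (\<Sum>v\<le>N. 2 * (\<Sum>u\<le>N. ?\<psi> v u))"
    by (intro mult_left_mono sum_mono sum_cdist_le) simp_all
  also have "\<dots> \<le> 16 * harm N"
    using sum_inv_max_square_le[of N] by (simp add: sum_distrib_left[symmetric])
  also have "\<dots> \<le> 16 * (1 + ln N)"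
    using harm_le_one_plus_ln[of N] N by simp
  also have "\<dots> \<le> 40 * ln N"
  proof -
    have "ln 2 \<le> ln (real N)" using N by simp
    then show ?thesis using ln2_ge_two_thirds by simp
  qed
  finally show ?thesis .
qed

section \<open>Sampling a periodic \<open>C\<^sup>2\<close> function\<close>

context
  fixes f :: "real \<times> real \<Rightarrow> real" and N :: nat and g :: "nat \<times> nat \<Rightarrow> real"
  assumes periodic: "periodic2 f" and C2f: "C2 f" and N: "0 < N"
    and sample: "\<And>x1 x2. g (x1, x2) = f (real x1 / real N, real x2 / real N)"
begin

lemma sample_fst_snd: "g x = f (real (fst x) / N, real (snd x) / N)"
  using sample[of "fst x" "snd x"] by simp

lemma riemann_sum_sample:
  "\<bar>(\<Sum>x\<in>ZN2 N. g x) - (real N)\<^sup>2 * integral unit_square f\<bar> \<le> 2 * C2_norm f * N"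
  using riemann_sum_error[OF N C2_continuous[OF C2f] C2_lipschitz[OF C2f periodic]]
  unfolding sample_fst_snd .

lemma riemann_sum_sample_square:
  "\<bar>(\<Sum>x\<in>ZN2 N. (g x)\<^sup>2) - (real N)\<^sup>2 * L2_norm_sq f\<bar> \<le> 4 * (C2_norm f)\<^sup>2 * N"
proof -
  let ?C = "C2_norm f"
  have "\<bar>(f (a, b))\<^sup>2 - (f (c, d))\<^sup>2\<bar> \<le> (2 * ?C * ?C) * (\<bar>a - c\<bar> + \<bar>b - d\<bar>)" for a b c d
  proof -
    have "\<bar>(f (a, b))\<^sup>2 - (f (c, d))\<^sup>2\<bar> = \<bar>f (a, b) + f (c, d)\<bar> * \<bar>f (a, b) - f (c, d)\<bar>"
      by (simp add: power2_eq_square abs_mult[symmetric] algebra_simps)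
    also have "\<dots> \<le> (2 * ?C) * (?C * (\<bar>a - c\<bar> + \<bar>b - d\<bar>))"
    proof (intro mult_mono)
      show "\<bar>f (a, b) + f (c, d)\<bar> \<le> 2 * ?C"
        using abs_triangle_ineq[of "f (a, b)" "f (c, d)"]
          abs_partials_le_C2_norm_periodic(1)[OF C2f periodic, of "(a, b)"]
          abs_partials_le_C2_norm_periodic(1)[OF C2f periodic, of "(c, d)"] by linarith
    qed (use C2_lipschitz[OF C2f periodic] C2_norm_nonneg[OF C2f] in auto)
    finally show ?thesis by (simp add: mult_ac)
  qed
  from riemann_sum_error[OF N _ this] show ?thesis
    unfolding L2_norm_sq_def sample_fst_snd[symmetric]
    by (simp add: power2_eq_square mult_ac continuous_intros C2_continuous[OF C2f])
qed

lemma sample_periodic: "g (a + N, b) = g (a, b)" "g (a, b + N) = g (a, b)"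
proof -
  have "real (k + N) / N = real k / N + 1" for k using N by (simp add: field_simps)
  then show "g (a + N, b) = g (a, b)" "g (a, b + N) = g (a, b)"
    using periodic unfolding sample periodic2_def by simp_all
qed

lemma sample_second_difference:
  "\<bar>g (a + 1, b) - 2 * g (a, b) + g (a + (N - 1), b)\<bar> \<le> 2 * C2_norm f / N\<^sup>2"
  "\<bar>g (a, b + 1) - 2 * g (a, b) + g (a, b + (N - 1))\<bar> \<le> 2 * C2_norm f / N\<^sup>2"
proof -
  have step: "real (k + 1) / N = real k / N + 1 / N"
      "real (k + (N - 1)) / N = (real k / N - 1 / N) + 1" for k
    using N by (simp_all add: of_nat_diff field_simps)
  have h: "0 < 1 / real N" using N by simp
  show "\<bar>g (a + 1, b) - 2 * g (a, b) + g (a + (N - 1), b)\<bar> \<le> 2 * C2_norm f / N\<^sup>2"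
    using C2_second_difference_fst[OF C2f periodic h, of "real a / N" "real b / N"] periodic
    unfolding sample step periodic2_def by (simp add: power_divide)
  show "\<bar>g (a, b + 1) - 2 * g (a, b) + g (a, b + (N - 1))\<bar> \<le> 2 * C2_norm f / N\<^sup>2"
    using C2_second_difference_snd[OF C2f periodic h, of "real a / N" "real b / N"] periodic
    unfolding sample step periodic2_def by (simp add: power_divide)
qed

lemma fourier_sample_decay:
  assumes m: "m \<in> ZN2 N"
  shows "cmod (fourier N g m) * (real (max (cdist N (fst m)) (cdist N (snd m))))\<^sup>2
      \<le> 2 * C2_norm f * N / 9"
proof -
  have "(real (cdist N a))\<^sup>2 * cmod (fourier N g m) \<le> 2 * C2_norm f * N / 9"
    if a: "a < N" and bound: "(2 - 2 * cos (2 * pi * real a / N)) * cmod (fourier N g m)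
        \<le> 2 * C2_norm f / N"
    for a
  proof -
    have "9 * (real (cdist N a))\<^sup>2 / (real N)\<^sup>2 * cmod (fourier N g m) \<le> 2 * C2_norm f / N"
      using two_minus_two_cos_ge_cdist[OF N a] bound
      by (meson mult_right_mono norm_ge_zero order_trans)
    then show ?thesis using N by (simp add: field_simps power2_eq_square)
  qed
  moreover have "N * (2 * C2_norm f / N\<^sup>2) = 2 * C2_norm f / N"
    using N by (simp add: power2_eq_square)
  ultimately have "(real (cdist N (fst m)))\<^sup>2 * cmod (fourier N g m) \<le> 2 * C2_norm f * N / 9"
      "(real (cdist N (snd m)))\<^sup>2 * cmod (fourier N g m) \<le> 2 * C2_norm f * N / 9"
    using m fourier_second_difference_fst[OF N sample_periodic(1) sample_second_difference(1), of m]
      fourier_second_difference_snd[OF N sample_periodic(2) sample_second_difference(2), of m]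
    unfolding ZN2_def by auto
  then show ?thesis by (simp add: max_def mult.commute)
qed

lemma norm_fourier_sample_zero:
  "cmod (fourier N g (0, 0)) \<le> N * \<bar>integral unit_square f\<bar> + 2 * C2_norm f"
proof -
  have "cmod (fourier N g (0, 0)) = \<bar>\<Sum>x\<in>ZN2 N. g x\<bar> / N"
    unfolding fourier_def by (simp add: norm_divide flip: of_real_sum)
  also have "\<dots> \<le> ((real N)\<^sup>2 * \<bar>integral unit_square f\<bar> + 2 * C2_norm f * N) / N"
    using riemann_sum_sample abs_triangle_ineq2[of "\<Sum>x\<in>ZN2 N. g x"
      "(real N)\<^sup>2 * integral unit_square f"]
    by (intro divide_right_mono) (simp_all add: abs_mult)
  also have "\<dots> = N * \<bar>integral unit_square f\<bar> + 2 * C2_norm f"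
    using N by (simp add: field_simps power2_eq_square)
  finally show ?thesis .
qed

lemma sum_norm_fourier_sample_le:
  assumes N2: "2 \<le> N"
  shows "(\<Sum>m\<in>ZN2 N. cmod (fourier N g m))
    \<le> N * \<bar>integral unit_square f\<bar> + 2 * C2_norm f + 80 / 9 * C2_norm f * N * ln N"
proof -
  let ?\<psi> = "\<lambda>m. 1 / (real (max (cdist N (fst m)) (cdist N (snd m))))\<^sup>2"
  have C: "0 \<le> C2_norm f" by (rule C2_norm_nonneg[OF C2f])
  have "cmod (fourier N g m) \<le> (if m = (0, 0) then cmod (fourier N g (0, 0)) else 0)
      + 2 * C2_norm f * N / 9 * ?\<psi> m"
    if m: "m \<in> ZN2 N" for m
  proof (cases "m = (0, 0)")
    case False
    then have "max (cdist N (fst m)) (cdist N (snd m)) \<noteq> 0"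
      using m cdist_eq_0_iff[of "fst m" N] cdist_eq_0_iff[of "snd m" N] unfolding ZN2_def
      by (auto simp: prod_eq_iff)
    then show ?thesis using fourier_sample_decay[OF m] False by (simp add: field_simps)
  qed (use C in simp)
  then have "(\<Sum>m\<in>ZN2 N. cmod (fourier N g m))
      \<le> (\<Sum>m\<in>ZN2 N. (if m = (0, 0) then cmod (fourier N g (0, 0)) else 0)
        + 2 * C2_norm f * N / 9 * ?\<psi> m)"
    by (rule sum_mono)
  also have "\<dots> = cmod (fourier N g (0, 0)) + 2 * C2_norm f * N / 9 * (\<Sum>m\<in>ZN2 N. ?\<psi> m)"
    using N unfolding ZN2_def by (simp add: sum.distrib sum_distrib_left)
  also have "\<dots> \<le> N * \<bar>integral unit_square f\<bar> + 2 * C2_norm f + 2 * C2_norm f * N / 9 * (40 * ln N)"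
    using norm_fourier_sample_zero sum_cdist_inv_max_square_le[OF N2] C
    by (intro add_mono mult_left_mono) auto
  finally show ?thesis by simp
qed

lemma sqrt_sum_norm_fourier_sample_ge:
  assumes big: "8 * (C2_norm f)\<^sup>2 \<le> real N * (L2_norm f)\<^sup>2"
  shows "N * L2_norm f / 2 \<le> sqrt (\<Sum>m\<in>ZN2 N. (cmod (fourier N g m))\<^sup>2)"
proof -
  have Q: "0 \<le> L2_norm_sq f"
    unfolding L2_norm_sq_def
    by (rule has_integral_nonneg[OF has_integral_integral_unit_square])
      (auto intro: continuous_intros C2_continuous[OF C2f])
  then have L2: "(L2_norm f)\<^sup>2 = L2_norm_sq f" "0 \<le> L2_norm f" unfolding L2_norm_def by simp_all
  have "4 * (C2_norm f)\<^sup>2 * N \<le> (real N)\<^sup>2 * L2_norm_sq f / 2"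
    using mult_left_mono[OF big[unfolded L2(1)], of N] by (simp add: power2_eq_square algebra_simps)
  then have "(N * L2_norm f / 2)\<^sup>2 \<le> (\<Sum>x\<in>ZN2 N. (g x)\<^sup>2)"
    using riemann_sum_sample_square Q L2 by (simp add: power_mult_distrib power_divide)
  then show ?thesis unfolding parseval[OF N] by (rule real_le_rsqrt)
qed

lemma FR_sample_le:
  assumes N2: "2 \<le> N" and big: "8 * (C2_norm f)\<^sup>2 \<le> real N * (L2_norm f)\<^sup>2" and L2: "0 < L2_norm f"
  shows "FR N g \<le> 2 * \<bar>integral unit_square f\<bar> / L2_norm f
    + 160 / 9 * (C2_norm f / L2_norm f) * ln N + 4 * (C2_norm f / L2_norm f) / N"
proof -
  let ?A = "\<Sum>m\<in>ZN2 N. cmod (fourier N g m)"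
  have D: "0 < N * L2_norm f / 2" using N L2 by simp
  have den: "N * L2_norm f / 2 \<le> sqrt (\<Sum>m\<in>ZN2 N. (cmod (fourier N g m))\<^sup>2)"
    by (rule sqrt_sum_norm_fourier_sample_ge[OF big])
  have "FR N g \<le> ?A / (N * L2_norm f / 2)"
    unfolding FR_def using den D
    by (intro divide_left_mono sum_nonneg mult_pos_pos norm_ge_zero) linarith+
  also have "\<dots> \<le> (N * \<bar>integral unit_square f\<bar> + 2 * C2_norm f
      + 80 / 9 * C2_norm f * N * ln N) / (N * L2_norm f / 2)"
    using sum_norm_fourier_sample_le[OF N2] D by (intro divide_right_mono) auto
  also have "\<dots> = 2 * \<bar>integral unit_square f\<bar> / L2_norm f
      + 160 / 9 * (C2_norm f / L2_norm f) * ln N + 4 * (C2_norm f / L2_norm f) / N"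
    using N L2 by (simp add: field_simps)
  finally show ?thesis .
qed

end

lemma L2_norm_pos:
  assumes "C2 f" "periodic2 f" "\<exists>p. f p \<noteq> 0" "8 * (C2_norm f)\<^sup>2 \<le> real N * (L2_norm f)\<^sup>2"
  shows "0 < L2_norm f"
proof (rule ccontr)
  assume "\<not> 0 < L2_norm f"
  moreover have "0 \<le> L2_norm f"
    using abs_integral_le_L2_norm[OF C2_continuous[OF assms(1)]] by linarith
  ultimately have "C2_norm f = 0" using assms(4) by simp
  then show False using abs_partials_le_C2_norm_periodic(1)[OF assms(1,2)] assms(3) by fastforce
qed

theorem proposition1p6:
  fixes f :: "real \<times> real \<Rightarrow> real" and N :: nat and g :: "nat \<times> nat \<Rightarrow> real"
  assumes per1: "\<And>x y. f (x + 1, y) = f (x, y)"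
    and per2: "\<And>x y. f (x, y + 1) = f (x, y)"
    and C2f: "C2 f"
    and nz: "\<exists>p. f p \<noteq> 0"
    and N2: "N \<ge> 2"
    and gdef: "\<And>x1 x2. g (x1, x2) = f (real x1 / real N, real x2 / real N)"
    and big: "real N * (L2_norm f)\<^sup>2 \<ge> 8 * (C2_norm f)\<^sup>2"
  shows "(FR N g \<le> 2 * \<bar>integral unit_square f\<bar> / L2_norm f
            + 16 * pi\<^sup>2 * (C2_norm f / L2_norm f) * ln (real N)
            + (8 * pi\<^sup>2 / L2_norm f) * (C2_norm f / real N)) \<and>
         ((\<forall>p. f p \<ge> 0) \<longrightarrow> integral unit_square f > 0 \<longrightarrow>
         FR N g \<le> 2 + 16 * pi\<^sup>2 * (C2_norm f / integral unit_square f) * ln (real N)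
            + (8 * pi\<^sup>2 / integral unit_square f) * (C2_norm f / real N))"
proof -
  let ?I = "integral unit_square f" and ?L = "L2_norm f" and ?C = "C2_norm f"
  have periodic: "periodic2 f" using per1 per2 unfolding periodic2_def by blast
  have L: "0 < ?L" by (rule L2_norm_pos[OF C2f periodic nz big])
  have I: "\<bar>?I\<bar> \<le> ?L" by (rule abs_integral_le_L2_norm[OF C2_continuous[OF C2f]])
  have C: "0 \<le> ?C" "0 \<le> ln (real N)" using C2_norm_nonneg[OF C2f] N2 by simp_all
  have "FR N g \<le> 2 * \<bar>?I\<bar> / ?L + 160 / 9 * (?C * ln (real N)) / ?L + 4 * (?C / real N) / ?L"
    using FR_sample_le[OF periodic C2f _ gdef N2 big L] N2 by (simp add: mult_ac)
  also have "\<dots> \<le> 2 * \<bar>?I\<bar> / ?L + 16 * pi\<^sup>2 * (?C * ln (real N)) / ?L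
      + 8 * pi\<^sup>2 * (?C / real N) / ?L"
    using nine_le_pi_square C L by (intro add_mono divide_right_mono mult_right_mono) auto
  finally have "FR N g \<le> 2 * \<bar>?I\<bar> / ?L + 16 * pi\<^sup>2 * (?C * ln (real N)) / ?L
      + 8 * pi\<^sup>2 * (?C / real N) / ?L" .
  moreover have "2 * \<bar>?I\<bar> / ?L + 16 * pi\<^sup>2 * (?C * ln (real N)) / ?L + 8 * pi\<^sup>2 * (?C / real N) / ?L
      \<le> 2 + 16 * pi\<^sup>2 * (?C * ln (real N)) / ?I + 8 * pi\<^sup>2 * (?C / real N) / ?I" if "0 < ?I"
  proof (intro add_mono divide_left_mono)
    show "2 * \<bar>?I\<bar> / ?L \<le> 2" using I L by (simp add: pos_divide_le_eq)
  qed (use that I C in auto)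
  ultimately show ?thesis by (auto simp: mult_ac)
qed

end
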